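(* Let $G$ be a simple loopless graph on $[L]$ and $p\ge1$. For each $v\in[L]$ let $|c^*(v)|$ denote the size of the largest clique in $G$ containing $v$. For any Dyck path $\varepsilon\in D_{2p}$ and any labelling $i=(i_k)_{k\in\varepsilon^\uparrow}\in[L]^{\varepsilon^\uparrow}$, \[ |\mathcal{P}^{(\varepsilon)}_{2p}(G,i)|\le\min\Big\{\prod_{k\in\varepsilon^\uparrow}|c^*(i_k)|,\ p!\Big\}. \] In particular, $|\mathcal{P}^{(\varepsilon)}_{2p}(G,i)|\le\min(\omega(G)^p,p!)$, where $\omega(G)$ is the clique number of $G$.
   Context: $\mathcal{T}(G)=\langle v\in[L]: uv=vu \text{ for } (u,v)\in E(G)\rangle$ is the trace monoid of $G$ (words in letters $[L]$ modulo commutation of adjacent letters), $e$ the empty word, $|w|$ the length of $w$. Words are adjacent, $w_1\leftrightarrow w_2$, if $w_1=vw_2$ or $w_2=vw_1$ for a letter $v\in[L]$. $\mathcal{P}_{2p}(G)=\{w\in\mathcal{T}(G)^{2p}: e\leftrightarrow w_1\leftrightarrow\cdots\leftrightarrow w_{2p}=e\}$. $D_{2p}$ is the set of Dyck paths $\varepsilon\in\{+1,-1\}^{2p}$ (all partial sums nonnegative, total sum zero); $\varepsilon^\uparrow=\{k:\varepsilon_k=+1\}$. For $w\in\mathcal{P}_{2p}(G)$, with $w_0:=e$, define $\varepsilon(w)_k=+1$ if $|w_k|>|w_{k-1}|$ and $-1$ otherwise; this is a Dyck path. $\mathcal{P}^{(\varepsilon)}_{2p}(G)=\{w\in\mathcal{P}_{2p}(G):\varepsilon(w)=\varepsilon\}$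 and, for $i\in[L]^{\varepsilon^\uparrow}$, $\mathcal{P}^{(\varepsilon)}_{2p}(G,i)=\{w\in\mathcal{P}^{(\varepsilon)}_{2p}(G): w_k=i_kw_{k-1}\text{ for all }k\in\varepsilon^\uparrow\}$. *)

theory Defs
  imports Main
begin

definition simple_graph :: "nat \<Rightarrow> (nat \<Rightarrow> nat \<Rightarrow> bool) \<Rightarrow> bool" where
  "simple_graph L E \<longleftrightarrow> (\<forall>a b. E a b \<longrightarrow> E b a) \<and> (\<forall>a. \<not> E a a)
     \<and> (\<forall>a b. E a b \<longrightarrow> a \<in> {1..L} \<and> b \<in> {1..L})"

definition comm_step :: "(nat \<Rightarrow> nat \<Rightarrow> bool) \<Rightarrow> (nat list \<times> nat list) set" where
  "comm_step E = {(u @ [a, b] @ v, u @ [b, a] @ v) | u v a b. E a b}"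

text \<open>The element of the trace monoid represented by a word: its equivalence class.\<close>
definition trace_of :: "(nat \<Rightarrow> nat \<Rightarrow> bool) \<Rightarrow> nat list \<Rightarrow> nat list set" where
  "trace_of E w = {w'. (w, w') \<in> (comm_step E)\<^sup>*}"

definition traces :: "nat \<Rightarrow> (nat \<Rightarrow> nat \<Rightarrow> bool) \<Rightarrow> nat list set set" where
  "traces L E = trace_of E ` lists {1..L}"

definition tr_empty :: "(nat \<Rightarrow> nat \<Rightarrow> bool) \<Rightarrow> nat list set" where
  "tr_empty E = trace_of E []"

text \<open>Length of a trace (all representatives have the same length).\<close>
definition tlen :: "nat list set \<Rightarrow> nat" where
  "tlen T = length (SOME w. w \<in> T)"

definition lmul_eq :: "(nat \<Rightarrow> nat \<Rightarrow> bool) \<Rightarrow> nat list set \<Rightarrow> nat \<Rightarrow> nat list set \<Rightarrow> bool" where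
  "lmul_eq E T1 v T2 \<longleftrightarrow> (\<exists>w\<in>T2. T1 = trace_of E (v # w))"

definition tr_adj :: "nat \<Rightarrow> (nat \<Rightarrow> nat \<Rightarrow> bool) \<Rightarrow> nat list set \<Rightarrow> nat list set \<Rightarrow> bool" where
  "tr_adj L E T1 T2 \<longleftrightarrow> (\<exists>v\<in>{1..L}. lmul_eq E T1 v T2 \<or> lmul_eq E T2 v T1)"

text \<open>A path (w_1,...,w_{2p}) is a list ws of length 2p with ws ! (k-1) = w_k; w_0 = e.\<close>
definition pw :: "(nat \<Rightarrow> nat \<Rightarrow> bool) \<Rightarrow> nat list set list \<Rightarrow> nat \<Rightarrow> nat list set" where
  "pw E ws k = (if k = 0 then tr_empty E else ws ! (k - 1))"

definition paths :: "nat \<Rightarrow> (nat \<Rightarrow> nat \<Rightarrow> bool) \<Rightarrow> nat \<Rightarrow> nat list set list set" where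
  "paths L E p = {ws. length ws = 2 * p \<and> set ws \<subseteq> traces L E
      \<and> (\<forall>k\<in>{1..2*p}. tr_adj L E (pw E ws (k - 1)) (pw E ws k))
      \<and> pw E ws (2 * p) = tr_empty E}"

text \<open>Dyck paths of length 2p, as lists eps with eps ! (k-1) = epsilon_k.\<close>
definition dyck :: "nat \<Rightarrow> int list \<Rightarrow> bool" where
  "dyck p eps \<longleftrightarrow> length eps = 2 * p \<and> set eps \<subseteq> {1, -1}
     \<and> (\<forall>j\<le>2 * p. sum_list (take j eps) \<ge> 0) \<and> sum_list eps = 0"

definition up_steps :: "int list \<Rightarrow> nat set" where
  "up_steps eps = {k \<in> {1..length eps}. eps ! (k - 1) = 1}"

definition path_eps :: "(nat \<Rightarrow> nat \<Rightarrow> bool) \<Rightarrow> nat list set list \<Rightarrow> int list" where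
  "path_eps E ws = map (\<lambda>k. if tlen (pw E ws k) > tlen (pw E ws (k - 1)) then 1 else -1)
                        [1..<Suc (length ws)]"

definition paths_eps :: "nat \<Rightarrow> (nat \<Rightarrow> nat \<Rightarrow> bool) \<Rightarrow> nat \<Rightarrow> int list \<Rightarrow> nat list set list set" where
  "paths_eps L E p eps = {ws \<in> paths L E p. path_eps E ws = eps}"

definition paths_eps_lab :: "nat \<Rightarrow> (nat \<Rightarrow> nat \<Rightarrow> bool) \<Rightarrow> nat \<Rightarrow> int list \<Rightarrow> (nat \<Rightarrow> nat)
     \<Rightarrow> nat list set list set" where
  "paths_eps_lab L E p eps i = {ws \<in> paths_eps L E p eps.
      \<forall>k\<in>up_steps eps. lmul_eq E (pw E ws k) (i k) (pw E ws (k - 1))}"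

definition is_clique :: "nat \<Rightarrow> (nat \<Rightarrow> nat \<Rightarrow> bool) \<Rightarrow> nat set \<Rightarrow> bool" where
  "is_clique L E C \<longleftrightarrow> C \<subseteq> {1..L} \<and> (\<forall>a\<in>C. \<forall>b\<in>C. a \<noteq> b \<longrightarrow> E a b)"

definition max_clique_at :: "nat \<Rightarrow> (nat \<Rightarrow> nat \<Rightarrow> bool) \<Rightarrow> nat \<Rightarrow> nat" where
  "max_clique_at L E v = Max {card C | C. is_clique L E C \<and> v \<in> C}"

definition clique_number :: "nat \<Rightarrow> (nat \<Rightarrow> nat \<Rightarrow> bool) \<Rightarrow> nat" where
  "clique_number L E = Max {card C | C. is_clique L E C}"

end

(*
  An up step of a labelled path is forced (w_k = i_k w_{k-1}), so the path is determined by its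
  down steps, each of which deletes a letter v that can be moved to the front of w_{k-1}.  Two
  such letters must commute, so the possible v form a clique containing v: there are at most
  |c*(v)| of them, and at most |w_{k-1}| of them.  Weighting a word by the product of |c*(a)| over
  its letters a, deleting v divides the weight by |c*(v)|, hence the weights of the successors of a
  down step sum to at most the weight of its source; this gives the product bound.  Bounding the
  number of choices by the current height of the Dyck path instead gives p!.
*)

theory Submission
  imports Defs "HOL-Library.Multiset"
begin

lemma simple_graph_symp: "simple_graph L E \<Longrightarrow> symp E"
  by (auto simp: simple_graph_def symp_def)

lemma simple_graph_irreflp: "simple_graph L E \<Longrightarrow> irreflp E"
  by (auto simp: simple_graph_def irreflp_def)

lemma comm_step_iff:
  "(x, y) \<in> comm_step E \<longleftrightarrow> (\<exists>u v a b. x = u @ [a, b] @ v \<and> y = u @ [b, a] @ v \<and> E a b)"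
  by (auto simp: comm_step_def)

lemma sym_comm_step:
  assumes "symp E"
  shows "sym (comm_step E)"
proof (rule symI)
  fix x y
  assume "(x, y) \<in> comm_step E"
  then obtain u v a b where "x = u @ [a, b] @ v" "y = u @ [b, a] @ v" "E a b"
    using comm_step_iff by blast
  then show "(y, x) \<in> comm_step E"
    using assms unfolding comm_step_iff by (blast dest: sympD)
qed

lemma trace_of_eq_iff:
  assumes "symp E"
  shows "trace_of E x = trace_of E y \<longleftrightarrow> (x, y) \<in> (comm_step E)\<^sup>*"
proof
  assume "trace_of E x = trace_of E y"
  then show "(x, y) \<in> (comm_step E)\<^sup>*"
    by (metis mem_Collect_eq rtrancl.rtrancl_refl trace_of_def)
next
  assume "(x, y) \<in> (comm_step E)\<^sup>*"
  moreover from this have "(y, x) \<in> (comm_step E)\<^sup>*"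
    using sym_rtrancl[OF sym_comm_step[OF assms]] by (blast dest: symD)
  ultimately show "trace_of E x = trace_of E y"
    unfolding trace_of_def by (blast intro: rtrancl_trans)
qed

lemma comm_steps_mset: "(x, y) \<in> (comm_step E)\<^sup>* \<Longrightarrow> mset x = mset y"
  by (induction rule: rtrancl_induct) (auto simp: comm_step_iff add_mset_commute)

lemma tlen_trace_of: "tlen (trace_of E x) = length x"
proof -
  have "(SOME w. w \<in> trace_of E x) \<in> trace_of E x"
    by (rule someI[of _ x]) (simp add: trace_of_def)
  then show ?thesis
    unfolding tlen_def trace_of_def by (metis comm_steps_mset mem_Collect_eq size_mset)
qed

lemma comm_steps_Cons: "(x, y) \<in> (comm_step E)\<^sup>* \<Longrightarrow> (a # x, a # y) \<in> (comm_step E)\<^sup>*"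
proof (induction rule: rtrancl_induct)
  case (step y z)
  then have "(a # y, a # z) \<in> comm_step E"
    unfolding comm_step_iff by (metis append_Cons)
  with step.IH show ?case by (rule rtrancl_into_rtrancl)
qed simp

lemma lmul_eq_trace_of_iff:
  assumes "symp E"
  shows "lmul_eq E T a (trace_of E x) \<longleftrightarrow> T = trace_of E (a # x)"
  unfolding lmul_eq_def
  by (metis assms comm_steps_Cons mem_Collect_eq rtrancl.rtrancl_refl trace_of_def trace_of_eq_iff)

lemma comm_step_remove1:
  assumes "irreflp E" and "(x, y) \<in> comm_step E"
  shows "(remove1 c x, remove1 c y) \<in> (comm_step E)\<^sup>*"
proof -
  obtain u v a b where x: "x = u @ [a, b] @ v" and y: "y = u @ [b, a] @ v" and "E a b"
    using assms(2) comm_step_iff by blast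
  moreover have "a \<noteq> b"
    using \<open>E a b\<close> assms(1) by (auto dest: irreflpD)
  ultimately consider "c \<notin> set u" "c = a \<or> c = b" | "c \<in> set u \<or> (c \<noteq> a \<and> c \<noteq> b)"
    by blast
  then show ?thesis
  proof cases
    case 1
    then show ?thesis
      using \<open>a \<noteq> b\<close> by (auto simp: x y remove1_append)
  next
    case 2
    then have "(remove1 c x, remove1 c y) \<in> comm_step E"
      using \<open>E a b\<close> unfolding comm_step_iff by (auto simp: x y remove1_append)
    then show ?thesis by blast
  qed
qed

lemma comm_steps_remove1:
  assumes "irreflp E"
  shows "(x, y) \<in> (comm_step E)\<^sup>* \<Longrightarrow> (remove1 c x, remove1 c y) \<in> (comm_step E)\<^sup>*"
  by (induction rule: rtrancl_induct) (auto intro: rtrancl_trans comm_step_remove1[OF assms])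

lemma comm_steps_filter_non_adjacent:
  assumes "irreflp E" and "\<not> E a b" and "\<not> E b a"
  shows "(x, y) \<in> (comm_step E)\<^sup>* \<Longrightarrow> filter (\<lambda>c. c = a \<or> c = b) x = filter (\<lambda>c. c = a \<or> c = b) y"
proof (induction rule: rtrancl_induct)
  case (step y z)
  then obtain u v c d where "y = u @ [c, d] @ v" "z = u @ [d, c] @ v" "E c d"
    using comm_step_iff by blast
  moreover have "c \<noteq> d"
    using \<open>E c d\<close> assms(1) by (auto dest: irreflpD)
  ultimately show ?case
    using step.IH assms(2,3) by auto
qed simp

section \<open>Letters that can start a trace\<close>

definition first_letters :: "nat \<Rightarrow> (nat \<Rightarrow> nat \<Rightarrow> bool) \<Rightarrow> nat list \<Rightarrow> nat set" where
  "first_letters L E x = {a \<in> {1..L}. \<exists>y. (x, a # y) \<in> (comm_step E)\<^sup>*}"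

lemma finite_first_letters: "finite (first_letters L E x)"
  by (simp add: first_letters_def)

lemma first_letters_subset_set: "first_letters L E x \<subseteq> set x"
proof
  fix a
  assume "a \<in> first_letters L E x"
  then obtain y where "(x, a # y) \<in> (comm_step E)\<^sup>*"
    by (auto simp: first_letters_def)
  then have "set x = set (a # y)"
    by (metis comm_steps_mset set_mset_mset)
  then show "a \<in> set x"
    by simp
qed

lemma is_clique_first_letters:
  assumes "simple_graph L E"
  shows "is_clique L E (first_letters L E x)"
  unfolding is_clique_def
proof (intro conjI ballI impI)
  show "first_letters L E x \<subseteq> {1..L}"
    by (auto simp: first_letters_def)
next
  fix a b
  assume "a \<in> first_letters L E x" "b \<in> first_letters L E x" "a \<noteq> b"
  then obtain y z where "(x, a # y) \<in> (comm_step E)\<^sup>*" "(x, b # z) \<in> (comm_step E)\<^sup>*"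
    by (auto simp: first_letters_def)
  show "E a b"
  proof (rule ccontr)
    assume "\<not> E a b"
    with assms have "\<not> E b a"
      by (auto dest: sympD simple_graph_symp)
    note filter_eq = comm_steps_filter_non_adjacent[OF simple_graph_irreflp[OF assms] \<open>\<not> E a b\<close> \<open>\<not> E b a\<close>]
    have "filter (\<lambda>c. c = a \<or> c = b) (a # y) = filter (\<lambda>c. c = a \<or> c = b) (b # z)"
      using filter_eq[OF \<open>(x, a # y) \<in> _\<close>] filter_eq[OF \<open>(x, b # z) \<in> _\<close>] by metis
    with \<open>a \<noteq> b\<close> show False
      by simp
  qed
qed

lemma finite_clique_sizes: "finite {card C | C. is_clique L E C \<and> P C}"
proof -
  have "{card C | C. is_clique L E C \<and> P C} \<subseteq> card ` Pow {1..L}"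
    unfolding is_clique_def by auto
  then show ?thesis
    by (rule finite_subset) simp
qed

lemma card_le_max_clique_at:
  assumes "is_clique L E C" and "a \<in> C"
  shows "card C \<le> max_clique_at L E a"
  unfolding max_clique_at_def using assms by (intro Max_ge finite_clique_sizes) blast

lemma is_clique_singleton: "a \<in> {1..L} \<Longrightarrow> is_clique L E {a}"
  by (simp add: is_clique_def)

lemma max_clique_at_pos: "a \<in> {1..L} \<Longrightarrow> 1 \<le> max_clique_at L E a"
  using card_le_max_clique_at[of L E "{a}" a] is_clique_singleton by simp

lemma max_clique_at_le_clique_number:
  assumes "a \<in> {1..L}"
  shows "max_clique_at L E a \<le> clique_number L E"
  unfolding max_clique_at_def clique_number_def
  using finite_clique_sizes[of L E "\<lambda>_. True"] is_clique_singleton[OF assms]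
  by (intro Max_mono) auto

section \<open>Walks with a prescribed step pattern\<close>

(* The step ws ! k goes up by the letter i (Suc k) if es ! k = 1 and down otherwise, so labels are
   indexed from 1 as in up_steps; T plays the role of w_0. *)

definition walk_step ::
    "nat \<Rightarrow> (nat \<Rightarrow> nat \<Rightarrow> bool) \<Rightarrow> int \<Rightarrow> nat \<Rightarrow> nat list set \<Rightarrow> nat list set \<Rightarrow> bool" where
  "walk_step L E e a T T' \<longleftrightarrow> (if e = 1 then lmul_eq E T' a T else (\<exists>v\<in>{1..L}. lmul_eq E T v T'))"

definition pattern_walks ::
    "nat \<Rightarrow> (nat \<Rightarrow> nat \<Rightarrow> bool) \<Rightarrow> (nat \<Rightarrow> nat) \<Rightarrow> nat list set \<Rightarrow> int list \<Rightarrow> nat list set list set" where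
  "pattern_walks L E i T es = {ws. length ws = length es \<and> set ws \<subseteq> range (trace_of E)
      \<and> (\<forall>k<length es. walk_step L E (es ! k) (i (Suc k)) ((T # ws) ! k) (ws ! k))}"

lemma pattern_walks_Nil: "pattern_walks L E i T [] = {[]}"
  by (auto simp: pattern_walks_def)

lemma pattern_walks_Cons:
  "pattern_walks L E i T (e # es) =
    (\<Union>T'\<in>{T' \<in> range (trace_of E). walk_step L E e (i 1) T T'}.
      (#) T' ` pattern_walks L E (\<lambda>k. i (Suc k)) T' es)"
  by (auto simp: pattern_walks_def length_Suc_conv All_less_Suc2 image_iff) blast+

lemma walk_step_up:
  assumes "symp E"
  shows "walk_step L E 1 a (trace_of E x) T' \<longleftrightarrow> T' = trace_of E (a # x)"
  by (simp add: walk_step_def lmul_eq_trace_of_iff[OF assms])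

lemma walk_step_down:
  assumes "symp E" and "irreflp E" and "e \<noteq> 1"
    and "walk_step L E e a (trace_of E x) (trace_of E z)"
  shows "\<exists>v\<in>first_letters L E x. trace_of E z = trace_of E (remove1 v x)"
proof -
  obtain v where "v \<in> {1..L}" and "trace_of E x = trace_of E (v # z)"
    using assms(3,4) by (auto simp: walk_step_def lmul_eq_trace_of_iff[OF assms(1)])
  then have "(x, v # z) \<in> (comm_step E)\<^sup>*"
    by (simp add: trace_of_eq_iff[OF assms(1)])
  then have "v \<in> first_letters L E x" and "(remove1 v x, z) \<in> (comm_step E)\<^sup>*"
    using \<open>v \<in> {1..L}\<close> comm_steps_remove1[OF assms(2), of x "v # z" v]
    by (auto simp: first_letters_def)
  then show ?thesis
    by (metis trace_of_eq_iff[OF assms(1)])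
qed

lemma pattern_walks_up:
  assumes "symp E"
  shows "pattern_walks L E i (trace_of E x) (1 # es) =
    (#) (trace_of E (i 1 # x)) ` pattern_walks L E (\<lambda>k. i (Suc k)) (trace_of E (i 1 # x)) es"
  by (auto simp: pattern_walks_Cons walk_step_up[OF assms])

lemma pattern_walks_down:
  assumes "symp E" and "irreflp E" and "e \<noteq> 1"
  shows "pattern_walks L E i (trace_of E x) (e # es) \<subseteq>
    (\<Union>v\<in>first_letters L E x. (#) (trace_of E (remove1 v x)) `
      pattern_walks L E (\<lambda>k. i (Suc k)) (trace_of E (remove1 v x)) es)"
  unfolding pattern_walks_Cons using walk_step_down[OF assms] by fastforce

primrec walk_bound ::
    "nat \<Rightarrow> (nat \<Rightarrow> nat \<Rightarrow> bool) \<Rightarrow> (nat \<Rightarrow> nat) \<Rightarrow> nat list \<Rightarrow> int list \<Rightarrow> nat" where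
  "walk_bound L E i x [] = 1"
| "walk_bound L E i x (e # es) =
    (if e = 1 then walk_bound L E (\<lambda>k. i (Suc k)) (i 1 # x) es
     else (\<Sum>v\<in>first_letters L E x. walk_bound L E (\<lambda>k. i (Suc k)) (remove1 v x) es))"

lemma finite_pattern_walks:
  assumes "simple_graph L E"
  shows "finite (pattern_walks L E i (trace_of E x) es)"
proof (induction es arbitrary: i x)
  case (Cons e es)
  note symp = simple_graph_symp[OF assms] and irreflp = simple_graph_irreflp[OF assms]
  show ?case
  proof (cases "e = 1")
    case True
    then show ?thesis
      using Cons.IH by (simp add: pattern_walks_up[OF symp])
  next
    case False
    show ?thesis
      using Cons.IH finite_first_letters by (blast intro: finite_subset[OF pattern_walks_down[OF symp irreflp False]])
  qed
qed (simp add: pattern_walks_Nil)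

lemma card_pattern_walks_le:
  assumes "simple_graph L E"
  shows "card (pattern_walks L E i (trace_of E x) es) \<le> walk_bound L E i x es"
proof (induction es arbitrary: i x)
  case (Cons e es)
  note symp = simple_graph_symp[OF assms] and irreflp = simple_graph_irreflp[OF assms]
  show ?case
  proof (cases "e = 1")
    case True
    then show ?thesis
      by (simp add: pattern_walks_up[OF symp])
        (metis Cons.IH card_image_le finite_pattern_walks[OF assms] le_trans)
  next
    case False
    let ?W = "\<lambda>v. pattern_walks L E (\<lambda>k. i (Suc k)) (trace_of E (remove1 v x)) es"
    have "card (pattern_walks L E i (trace_of E x) (e # es))
        \<le> card (\<Union>v\<in>first_letters L E x. (#) (trace_of E (remove1 v x)) ` ?W v)"
      using pattern_walks_down[OF symp irreflp False]
      by (intro card_mono) (auto intro: finite_first_letters finite_pattern_walks[OF assms])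
    also have "\<dots> \<le> (\<Sum>v\<in>first_letters L E x. card ((#) (trace_of E (remove1 v x)) ` ?W v))"
      by (rule card_UN_le[OF finite_first_letters])
    also have "\<dots> \<le> (\<Sum>v\<in>first_letters L E x. walk_bound L E (\<lambda>k. i (Suc k)) (remove1 v x) es)"
      using Cons.IH card_image_le[OF finite_pattern_walks[OF assms]] le_trans
      by (intro sum_mono) blast
    finally show ?thesis
      using False by simp
  qed
qed (simp add: pattern_walks_Nil)

section \<open>The product and factorial estimates\<close>

lemma up_steps_Nil: "up_steps [] = {}"
  by (simp add: up_steps_def)

lemma up_steps_Cons: "up_steps (e # es) = (if e = 1 then {1} else {}) \<union> Suc ` up_steps es"
proof (rule set_eqI)
  fix k
  show "k \<in> up_steps (e # es) \<longleftrightarrow> k \<in> (if e = 1 then {1} else {}) \<union> Suc ` up_steps es"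
    by (cases k; cases "k - 1") (auto simp: up_steps_def inj_image_mem_iff)
qed

lemma finite_up_steps: "finite (up_steps es)"
  by (simp add: up_steps_def)

lemma zero_notin_up_steps: "0 \<notin> up_steps es"
  by (simp add: up_steps_def)

lemma prod_up_steps_Cons:
  "(\<Prod>k\<in>up_steps (e # es). f k) = (if e = 1 then f 1 else 1) * (\<Prod>k\<in>up_steps es. f (Suc k))"
  using zero_notin_up_steps[of es]
  by (simp add: up_steps_Cons finite_up_steps prod.reindex image_iff)

lemma sum_list_eq_up_steps:
  "set es \<subseteq> {1, -1} \<Longrightarrow> sum_list es = 2 * int (card (up_steps es)) - int (length es)"
proof (induction es)
  case (Cons e es)
  have "card (up_steps (e # es)) = (if e = 1 then 1 else 0) + card (up_steps es)"
    using zero_notin_up_steps[of es]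
    by (simp add: up_steps_Cons finite_up_steps card_image image_iff)
  with Cons show ?case
    by auto
qed (simp add: up_steps_Nil)

lemma prod_list_map_remove1:
  fixes f :: "'a \<Rightarrow> 'b::comm_monoid_mult"
  shows "a \<in> set xs \<Longrightarrow> prod_list (map f xs) = f a * prod_list (map f (remove1 a xs))"
  by (induction xs) (auto simp: mult.left_commute)

lemma sum_le_if_card_mult_le:
  fixes f :: "'a \<Rightarrow> nat"
  assumes "\<And>v. v \<in> M \<Longrightarrow> card M * f v \<le> W"
  shows "sum f M \<le> W"
proof (cases "card M = 0")
  case True
  then show ?thesis
    by (metis card_0_eq le0 sum.empty sum.infinite)
next
  case False
  have "card M * sum f M \<le> card M * W"
    using sum_bounded_above[of M "\<lambda>v. card M * f v" W] assms by (simp add: sum_distrib_left)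
  with False show ?thesis
    by simp
qed

lemma sum_first_letters_clique_weight_le:
  assumes "simple_graph L E"
  shows "(\<Sum>v\<in>first_letters L E x. prod_list (map (max_clique_at L E) (remove1 v x)))
    \<le> prod_list (map (max_clique_at L E) x)"
proof (rule sum_le_if_card_mult_le)
  fix v
  assume v: "v \<in> first_letters L E x"
  then have "card (first_letters L E x) \<le> max_clique_at L E v"
    by (rule card_le_max_clique_at[OF is_clique_first_letters[OF assms]])
  moreover have "max_clique_at L E v * prod_list (map (max_clique_at L E) (remove1 v x))
      = prod_list (map (max_clique_at L E) x)"
    using v first_letters_subset_set by (metis prod_list_map_remove1 subsetD)
  ultimately show "card (first_letters L E x) * prod_list (map (max_clique_at L E) (remove1 v x))
      \<le> prod_list (map (max_clique_at L E) x)"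
    by (metis mult_le_mono1)
qed

lemma one_le_prod_list_max_clique_at:
  "set x \<subseteq> {1..L} \<Longrightarrow> 1 \<le> prod_list (map (max_clique_at L E) x)"
proof (induction x)
  case (Cons a x)
  then have "1 \<le> max_clique_at L E a" and "1 \<le> prod_list (map (max_clique_at L E) x)"
    using max_clique_at_pos[of a L E] by simp_all
  then show ?case
    by simp
qed simp

lemma walk_bound_le_clique_weight:
  assumes "simple_graph L E"
  shows "set x \<subseteq> {1..L} \<Longrightarrow> \<forall>k\<in>up_steps es. i k \<in> {1..L} \<Longrightarrow>
    walk_bound L E i x es
      \<le> prod_list (map (max_clique_at L E) x) * (\<Prod>k\<in>up_steps es. max_clique_at L E (i k))"
proof (induction es arbitrary: i x)
  case Nil
  then show ?case
    using one_le_prod_list_max_clique_at[OF Nil.prems(1)] by (simp add: up_steps_Nil)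
next
  case (Cons e es)
  let ?c = "max_clique_at L E" and ?i' = "\<lambda>k. i (Suc k)"
  have labels: "\<forall>k\<in>up_steps es. ?i' k \<in> {1..L}"
    using Cons.prems(2) by (simp add: up_steps_Cons)
  show ?case
  proof (cases "e = 1")
    case True
    have "i 1 \<in> {1..L}"
      using Cons.prems(2) True by (simp add: up_steps_Cons)
    then have "walk_bound L E ?i' (i 1 # x) es
        \<le> prod_list (map ?c (i 1 # x)) * (\<Prod>k\<in>up_steps es. ?c (?i' k))"
      using Cons.IH[where x = "i 1 # x" and i = ?i'] labels Cons.prems(1) by simp
    with True show ?thesis
      by (simp add: prod_up_steps_Cons mult_ac)
  next
    case False
    have "walk_bound L E i x (e # es)
        \<le> (\<Sum>v\<in>first_letters L E x. prod_list (map ?c (remove1 v x)) * (\<Prod>k\<in>up_steps es. ?c (?i' k)))"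
      using False Cons.IH[OF order_trans[OF set_remove1_subset Cons.prems(1)] labels]
      by (simp add: sum_mono)
    also have "\<dots> \<le> prod_list (map ?c x) * (\<Prod>k\<in>up_steps es. ?c (?i' k))"
      using sum_first_letters_clique_weight_le[OF assms] by (simp add: sum_distrib_right[symmetric])
    finally show ?thesis
      using False by (simp add: prod_up_steps_Cons)
  qed
qed

lemma walk_bound_le_fact:
  "set es \<subseteq> {1, -1} \<Longrightarrow> int (length x) + sum_list es = 0 \<Longrightarrow>
    walk_bound L E i x es \<le> fact ((length x + length es) div 2)"
proof (induction es arbitrary: i x)
  case (Cons e es)
  show ?case
  proof (cases "e = 1")
    case True
    with Cons.prems show ?thesis
      using Cons.IH[where x = "i 1 # x"] by simp
  next
    case False
    with Cons.prems have e: "e = -1" and es: "set es \<subseteq> {1, -1}"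
      by auto
    let ?n = "(length x - 1 + length es) div 2"
    have "- int (length es) \<le> sum_list es"
      using sum_list_eq_up_steps[OF es] by simp
    then have height: "length x \<le> Suc ?n"
      using Cons.prems(2) e by simp
    have remove1_bound: "walk_bound L E (\<lambda>k. i (Suc k)) (remove1 v x) es \<le> fact ?n"
      if "v \<in> first_letters L E x" for v
    proof -
      have "v \<in> set x"
        using that first_letters_subset_set by blast
      then have "length (remove1 v x) = length x - 1" and "1 \<le> length x"
        by (auto simp: length_remove1 Suc_le_eq length_pos_if_in_set)
      then show ?thesis
        using Cons.IH[OF es, where x = "remove1 v x"] Cons.prems(2) e by simp
    qed
    have "walk_bound L E i x (e # es) \<le> card (first_letters L E x) * fact ?n"
      using False sum_bounded_above[OF remove1_bound] by simp
    also have "\<dots> \<le> length x * fact ?n"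
      using card_mono[OF finite_set first_letters_subset_set] card_length
      by (meson le_trans mult_le_mono1)
    also have "\<dots> \<le> fact ((length x + length (e # es)) div 2)"
    proof (cases x)
      case (Cons a x')
      then have "(length x + length (e # es)) div 2 = Suc ?n"
        by simp
      then show ?thesis
        using mult_le_mono1[OF height, of "fact ?n"] by simp
    qed simp
    finally show ?thesis .
  qed
qed simp

section \<open>Labelled paths\<close>

lemma pw_eq_nth: "pw E ws k = (tr_empty E # ws) ! k"
  by (simp add: pw_def nth_Cons')

lemma length_path_eps: "length (path_eps E ws) = length ws"
  by (simp only: path_eps_def length_map length_upt diff_Suc_1)

lemma nth_path_eps:
  "k < length ws \<Longrightarrow>
    path_eps E ws ! k = (if tlen (pw E ws (Suc k)) > tlen (pw E ws k) then 1 else -1)"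
  by (simp add: path_eps_def del: upt_Suc)

lemma tr_adj_not_longer:
  assumes "symp E" and "tr_adj L E T T'" and "T \<in> range (trace_of E)"
    and "\<not> tlen T' > tlen T"
  shows "\<exists>v\<in>{1..L}. lmul_eq E T v T'"
proof -
  obtain z where z: "T = trace_of E z"
    using assms(3) by blast
  have "\<not> lmul_eq E T' v T" for v
    using assms(4) by (auto simp: z lmul_eq_trace_of_iff[OF assms(1)] tlen_trace_of)
  with assms(2) show ?thesis
    by (auto simp: tr_adj_def)
qed

lemma paths_eps_lab_subset_pattern_walks:
  assumes "simple_graph L E"
  shows "paths_eps_lab L E p eps i \<subseteq> pattern_walks L E i (trace_of E []) eps"
proof
  note symp = simple_graph_symp[OF assms]
  fix ws
  assume "ws \<in> paths_eps_lab L E p eps i"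
  then have len: "length ws = 2 * p" and traces: "set ws \<subseteq> traces L E"
    and adj: "\<forall>k\<in>{1..2 * p}. tr_adj L E (pw E ws (k - 1)) (pw E ws k)"
    and eps: "path_eps E ws = eps"
    and up: "\<forall>k\<in>up_steps eps. lmul_eq E (pw E ws k) (i k) (pw E ws (k - 1))"
    unfolding paths_eps_lab_def paths_eps_def paths_def by auto
  have len_eps: "length eps = length ws"
    using eps length_path_eps by metis
  have walk: "set (tr_empty E # ws) \<subseteq> range (trace_of E)"
    using traces by (auto simp: traces_def tr_empty_def)
  have "walk_step L E (eps ! k) (i (Suc k)) (pw E ws k) (pw E ws (Suc k))" if k: "k < length eps" for k
  proof (cases "eps ! k = 1")
    case True
    then have "Suc k \<in> up_steps eps"
      using k by (simp add: up_steps_def)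
    with up have "lmul_eq E (pw E ws (Suc k)) (i (Suc k)) (pw E ws (Suc k - 1))"
      by blast
    with True show ?thesis
      by (simp add: walk_step_def)
  next
    case False
    have "pw E ws k \<in> set (tr_empty E # ws)"
      unfolding pw_eq_nth using k len_eps by (intro nth_mem) simp
    with walk have "pw E ws k \<in> range (trace_of E)"
      by blast
    moreover have "path_eps E ws ! k \<noteq> 1"
      using False eps by simp
    then have "\<not> tlen (pw E ws (Suc k)) > tlen (pw E ws k)"
      using nth_path_eps[of k ws E] k len_eps by (auto split: if_splits)
    moreover have "Suc k \<in> {1..2 * p}"
      using k len_eps len by simp
    with adj have "tr_adj L E (pw E ws k) (pw E ws (Suc k))"
      by fastforce
    ultimately show ?thesis
      using False tr_adj_not_longer[OF symp] by (simp add: walk_step_def)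
  qed
  with len_eps walk show "ws \<in> pattern_walks L E i (trace_of E []) eps"
    by (simp add: pattern_walks_def pw_eq_nth tr_empty_def)
qed

theorem proposition4p1:
  fixes L p :: nat and E :: "nat \<Rightarrow> nat \<Rightarrow> bool" and eps :: "int list" and i :: "nat \<Rightarrow> nat"
  assumes "simple_graph L E"
    and "p \<ge> 1"
    and "dyck p eps"
    and "\<forall>k\<in>up_steps eps. i k \<in> {1..L}"
  shows "card (paths_eps_lab L E p eps i)
           \<le> min (\<Prod>k\<in>up_steps eps. max_clique_at L E (i k)) (fact p)
       \<and> card (paths_eps_lab L E p eps i) \<le> min (clique_number L E ^ p) (fact p)"
proof -
  (* The bound also holds for p = 0. *)
  let ?c = "max_clique_at L E"
  have pm1: "set eps \<subseteq> {1, -1}" and "length eps = 2 * p" and "sum_list eps = 0"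
    using assms(3) by (auto simp: dyck_def)
  then have card_up: "card (up_steps eps) = p"
    using sum_list_eq_up_steps[OF pm1] by simp
  have "card (paths_eps_lab L E p eps i) \<le> walk_bound L E i [] eps"
    using card_mono[OF finite_pattern_walks paths_eps_lab_subset_pattern_walks] card_pattern_walks_le
      assms(1) le_trans by blast
  moreover have "walk_bound L E i [] eps \<le> (\<Prod>k\<in>up_steps eps. ?c (i k))"
    using walk_bound_le_clique_weight[OF assms(1) _ assms(4), where x = "[]"] by simp
  moreover have "walk_bound L E i [] eps \<le> fact p"
    using walk_bound_le_fact[OF pm1, where x = "[]"] \<open>length eps = 2 * p\<close> \<open>sum_list eps = 0\<close>
    by simp
  moreover have "(\<Prod>k\<in>up_steps eps. ?c (i k)) \<le> clique_number L E ^ p"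
    using prod_mono[of "up_steps eps" "\<lambda>k. ?c (i k)" "\<lambda>_. clique_number L E"]
      max_clique_at_le_clique_number assms(4) card_up by simp
  ultimately show ?thesis
    by simp
qed

end
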